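(* Let $a>0$, $b>0$, $q\in(0,1)$, and let $\alpha,\beta,t$ be real numbers with $\alpha+\beta t>1$. Then \[ a\gamma - b\ln(1-q) + a\psi(\alpha+\beta t) - b\psi_q(\alpha+\beta t) > 0 . \]
   Context: $\gamma$ denotes the Euler–Mascheroni constant and $\psi(t)=\Gamma'(t)/\Gamma(t)$ is the digamma function for $t>0$, where $\Gamma$ is Euler's Gamma function. For $q\in(0,1)$ and $t>0$, the $q$-Gamma function is $\Gamma_q(t)=(1-q)^{1-t}\prod_{n=1}^{\infty}\frac{1-q^n}{1-q^{t+n}}$, and $\psi_q(t)=\frac{d}{dt}\ln\Gamma_q(t)=\Gamma_q'(t)/\Gamma_q(t)$. *)

theory Defs
  imports "HOL-Analysis.Analysis"
begin

definition q_Gamma :: "real \<Rightarrow> real \<Rightarrow> real" where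
  "q_Gamma q t = (1 - q) powr (1 - t) *
     (\<Prod>n. (1 - q ^ Suc n) / (1 - q powr (t + real (Suc n))))"

definition q_Digamma :: "real \<Rightarrow> real \<Rightarrow> real" where
  "q_Digamma q t = deriv (\<lambda>s. ln (q_Gamma q s)) t"

end

theory Submission
  imports Defs
begin

text \<open>
  Since Digamma is strictly increasing with Digamma 1 = -euler_mascheroni, the first part
  a (euler_mascheroni + Digamma x) is positive for x > 1. For the second part, take logarithms
  in the product defining q_Gamma and differentiate termwise (the derivative series is dominated
  by a geometric series uniformly on half-lines s > m > -1); this gives
  q_Digamma q x = - ln (1 - q) + ln q * (sum over n \<ge> 1 of q^(x+n) / (1 - q^(x+n))),
  a series of negative terms, so q_Digamma q x < - ln (1 - q).
\<close>

definition q_log_factor :: "real \<Rightarrow> nat \<Rightarrow> real \<Rightarrow> real" where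
  "q_log_factor q n s = ln (1 - q ^ Suc n) - ln (1 - q powr (s + real (Suc n)))"

definition q_log_factor_deriv :: "real \<Rightarrow> nat \<Rightarrow> real \<Rightarrow> real" where
  "q_log_factor_deriv q n s =
     ln q * q powr (s + real (Suc n)) / (1 - q powr (s + real (Suc n)))"

lemma powr_less_one_base:
  fixes q y :: real
  assumes "0 < q" "q < 1" "0 < y"
  shows "q powr y < 1"
  using assms powr_less_mono2[of y q 1] by simp

lemma has_field_derivative_q_log_factor:
  assumes "0 < q" "q < 1" "s > -1"
  shows "(q_log_factor q n has_field_derivative q_log_factor_deriv q n s) (at s within S)"
proof -
  have "q powr (s + real (Suc n)) < 1"
    using assms by (intro powr_less_one_base) auto
  then have "exp ((s + real (Suc n)) * ln q) < 1"
    using assms by (simp add: powr_def)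
  then show ?thesis
    using assms unfolding q_log_factor_def q_log_factor_deriv_def powr_def
    by (auto intro!: derivative_eq_intros)
qed

lemma q_log_factor_deriv_neg:
  assumes "0 < q" "q < 1" "s > -1"
  shows "q_log_factor_deriv q n s < 0"
proof -
  have "q powr (s + real (Suc n)) < 1"
    using assms by (intro powr_less_one_base) auto
  then show ?thesis
    using assms unfolding q_log_factor_deriv_def by (simp add: mult_neg_pos divide_neg_pos)
qed

lemma abs_q_log_factor_deriv_le:
  assumes q: "0 < q" "q < 1" and m: "m > -1" "m \<le> s"
  shows "\<bar>q_log_factor_deriv q n s\<bar> \<le> (- ln q / (1 - q powr (m + 1))) * q ^ n"
proof -
  define y where "y = s + real (Suc n)"
  define c where "c = 1 - q powr (m + 1)"
  have c_pos: "c > 0"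
    unfolding c_def using q m by (simp add: powr_less_one_base)
  have "q powr y \<le> q powr real n"
    using q m by (intro powr_mono') (auto simp: y_def)
  then have pow_le: "q powr y \<le> q ^ n"
    using q by (simp add: powr_realpow)
  have "q powr y \<le> q powr (m + 1)"
    using q m by (intro powr_mono') (auto simp: y_def)
  then have denom_ge: "1 - q powr y \<ge> c"
    unfolding c_def by simp
  have "\<bar>q_log_factor_deriv q n s\<bar> = (- ln q) * q powr y / (1 - q powr y)"
    unfolding q_log_factor_deriv_def y_def[symmetric]
    using q c_pos denom_ge by (simp add: abs_mult abs_divide)
  also have "\<dots> \<le> (- ln q) * q ^ n / c"
    using q c_pos denom_ge pow_le mult_nonpos_nonneg[of "ln q" "q ^ n"]
    by (intro frac_le mult_left_mono) auto
  finally show ?thesis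
    unfolding c_def by simp
qed

lemma summable_q_log_factor_deriv:
  assumes "0 < q" "q < 1" "s > -1"
  shows "summable (\<lambda>n. q_log_factor_deriv q n s)"
proof (rule summable_comparison_test')
  show "summable (\<lambda>n. (- ln q / (1 - q powr (s + 1))) * q ^ n)"
    using assms by (intro summable_mult summable_geometric) auto
  show "norm (q_log_factor_deriv q n s) \<le> (- ln q / (1 - q powr (s + 1))) * q ^ n" for n
    using assms abs_q_log_factor_deriv_le[of q s s n] by simp
qed

lemma q_log_factor_series_has_field_derivative:
  assumes q: "0 < q" "q < 1" and s: "s > -1"
  shows "summable (\<lambda>n. q_log_factor q n s)"
    and "((\<lambda>s. \<Sum>n. q_log_factor q n s) has_field_derivative
           (\<Sum>n. q_log_factor_deriv q n s)) (at s)"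
proof -
  \<comment> \<open>The half-line S also contains 0, where every term of the series vanishes.\<close>
  define m where "m = (min s 0 - 1) / 2"
  define S where "S = {m<..}"
  have m: "m > -1" and sS: "s \<in> S" and zero_S: "0 \<in> S"
    using s by (auto simp: m_def S_def)
  have deriv: "(q_log_factor q n has_field_derivative q_log_factor_deriv q n x) (at x within S)"
    if "x \<in> S" for n x
    using that q m by (intro has_field_derivative_q_log_factor) (auto simp: S_def)
  have unif: "uniformly_convergent_on S (\<lambda>n x. \<Sum>i<n. q_log_factor_deriv q i x)"
  proof (rule Weierstrass_m_test')
    show "norm (q_log_factor_deriv q n x) \<le> (- ln q / (1 - q powr (m + 1))) * q ^ n"
      if "x \<in> S" for n x
      using that q m abs_q_log_factor_deriv_le[of q m x n] by (simp add: S_def)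
    show "summable (\<lambda>n. (- ln q / (1 - q powr (m + 1))) * q ^ n)"
      using q by (intro summable_mult summable_geometric) auto
  qed
  have "q_log_factor q n 0 = 0" for n
    using powr_realpow[OF q(1), of "Suc n"] by (simp add: q_log_factor_def)
  then have "summable (\<lambda>n. q_log_factor q n 0)"
    by simp
  moreover have "convex S" and "s \<in> interior S"
    using sS by (auto simp: S_def interior_open)
  ultimately show "summable (\<lambda>n. q_log_factor q n s)"
    and "((\<lambda>s. \<Sum>n. q_log_factor q n s) has_field_derivative
           (\<Sum>n. q_log_factor_deriv q n s)) (at s)"
    using has_field_derivative_series'[OF _ deriv unif zero_S] by (auto simp: S_def)
qed

lemma ln_q_Gamma_eq_series:
  assumes q: "0 < q" "q < 1" and s: "s > -1"
  shows "ln (q_Gamma q s) = (1 - s) * ln (1 - q) + (\<Sum>n. q_log_factor q n s)"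
proof -
  have factor_eq: "(1 - q ^ Suc n) / (1 - q powr (s + real (Suc n))) = exp (q_log_factor q n s)"
    for n
  proof -
    have "q ^ Suc n < 1"
      using q power_strict_decreasing[of 0 "Suc n" q] by simp
    moreover have "q powr (s + real (Suc n)) < 1"
      using q s by (intro powr_less_one_base) auto
    ultimately show ?thesis
      unfolding q_log_factor_def by (simp add: exp_diff)
  qed
  have "q_Gamma q s = (1 - q) powr (1 - s) * exp (\<Sum>n. q_log_factor q n s)"
    unfolding q_Gamma_def factor_eq
    using prodinf_exp[OF q_log_factor_series_has_field_derivative(1)[OF q s]] by simp
  then show ?thesis
    using q by (simp add: ln_mult)
qed

lemma q_Digamma_eq_series:
  assumes q: "0 < q" "q < 1" and x: "x > -1"
  shows "q_Digamma q x = - ln (1 - q) + (\<Sum>n. q_log_factor_deriv q n x)"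
proof -
  have "((\<lambda>s. (1 - s) * ln (1 - q) + (\<Sum>n. q_log_factor q n s)) has_field_derivative
          - ln (1 - q) + (\<Sum>n. q_log_factor_deriv q n x)) (at x)"
    using q_log_factor_series_has_field_derivative(2)[OF q x]
    by (auto intro!: derivative_eq_intros)
  moreover have "eventually (\<lambda>s. ln (q_Gamma q s) =
                   (1 - s) * ln (1 - q) + (\<Sum>n. q_log_factor q n s)) (nhds x)"
    using eventually_nhds_in_open[of "{-1<..}" x] x
    by (auto elim!: eventually_mono intro: ln_q_Gamma_eq_series[OF q])
  ultimately have "((\<lambda>s. ln (q_Gamma q s)) has_field_derivative
                     - ln (1 - q) + (\<Sum>n. q_log_factor_deriv q n x)) (at x)"
    by (subst DERIV_cong_ev[OF refl _ refl]) auto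
  then show ?thesis
    unfolding q_Digamma_def by (rule DERIV_imp_deriv)
qed

lemma q_Digamma_less_minus_ln:
  assumes q: "0 < q" "q < 1" and x: "x > -1"
  shows "q_Digamma q x < - ln (1 - q)"
proof -
  have "(\<Sum>n. q_log_factor_deriv q n x) < 0"
    using suminf_pos[of "\<lambda>n. - q_log_factor_deriv q n x"]
      summable_q_log_factor_deriv[OF q x] q_log_factor_deriv_neg[OF q x]
    by (simp add: summable_minus suminf_minus)
  then show ?thesis
    using q_Digamma_eq_series[OF q x] by simp
qed

lemma euler_mascheroni_plus_Digamma_pos:
  fixes x :: real
  assumes "x > 1"
  shows "euler_mascheroni + Digamma x > 0"
  using Digamma_real_strict_mono[of 1 x] assms by simp

theorem lemma3p4:
  fixes a b q \<alpha> \<beta> t :: real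
  assumes "a > 0" and "b > 0" and "0 < q" and "q < 1" and "\<alpha> + \<beta> * t > 1"
  shows "a * euler_mascheroni - b * ln (1 - q) + a * Digamma (\<alpha> + \<beta> * t)
           - b * q_Digamma q (\<alpha> + \<beta> * t) > 0"
proof -
  have "a * (euler_mascheroni + Digamma (\<alpha> + \<beta> * t)) > 0"
    using assms by (simp add: euler_mascheroni_plus_Digamma_pos)
  moreover have "b * (- ln (1 - q) - q_Digamma q (\<alpha> + \<beta> * t)) > 0"
    using assms q_Digamma_less_minus_ln[of q "\<alpha> + \<beta> * t"] by simp
  ultimately show ?thesis
    by (simp add: algebra_simps)
qed

end
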